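(* Let $\varphi\in\mathfrak{sl}(2,\mathbb C)$ and consider the linear map $M_\varphi:i\mathfrak{su}(2)\to i\mathfrak{su}(2)$, $M_\varphi\gamma=[\varphi^*,[\varphi,\gamma]]+[\varphi,[\varphi^*,\gamma]]$. Then $M_\varphi$ is invertible if and only if $[\varphi,\varphi^*]\neq0$, i.e. if and only if $\varphi$ is not normal. If $[\varphi,\varphi^*]=0$ for some $0\ne\varphi\in\mathfrak{sl}(2,\mathbb C)$, then $M_\varphi$ has a one-dimensional kernel.
   Context: $i\mathfrak{su}(2)$ denotes the hermitian trace-free $2\times2$ complex matrices, and $\varphi^*$ is the conjugate transpose of $\varphi$. *)

theory Defs
  imports "HOL-Analysis.Analysis"
begin

type_synonym cmat2 = "complex^2^2"

definition ctransp :: "complex^'n^'n \<Rightarrow> complex^'n^'n" where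
  "ctransp A = (\<chi> i j. cnj (A $ j $ i))"

definition mcomm :: "complex^'n^'n \<Rightarrow> complex^'n^'n \<Rightarrow> complex^'n^'n" where
  "mcomm A B = A ** B - B ** A"

definition sl2C :: "cmat2 set" where
  "sl2C = {A. trace A = 0}"

text \<open>i su(2): hermitian trace-free 2x2 complex matrices (a real vector space).\<close>
definition isu2 :: "cmat2 set" where
  "isu2 = {A. ctransp A = A \<and> trace A = 0}"

definition Mop :: "cmat2 \<Rightarrow> cmat2 \<Rightarrow> cmat2" where
  "Mop \<phi> \<gamma> = mcomm (ctransp \<phi>) (mcomm \<phi> \<gamma>) + mcomm \<phi> (mcomm (ctransp \<phi>) \<gamma>)"

end

theory Submission
  imports Defs
begin

text \<open>For hermitian \<gamma> the trace form gives tr (\<gamma> M \<gamma>) = |[\<phi>, \<gamma>]|^2 + |[\<phi>*, \<gamma>]|^2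
  (Frobenius norms), so the kernel of M on i su(2) consists of the hermitian trace-free matrices
  commuting with \<phi>. In sl(2,\<complex>) the centralizer of \<phi> \<noteq> 0 is \<complex>\<phi>. A nonzero hermitian k\<phi>
  forces \<phi>* to be a multiple of \<phi>, so \<phi> is normal; conversely, for normal \<phi> one of \<phi> + \<phi>* and
  i(\<phi> - \<phi>*) is such a multiple, and the hermitian multiples of \<phi> form a real line. Since M is a
  linear endomorphism of the finite-dimensional space i su(2), it is bijective iff its kernel is
  trivial.\<close>

lemma ctransp_nth [simp]: "ctransp A $ i $ j = cnj (A $ j $ i)"
  by (simp add: ctransp_def)

lemma ctransp_ctransp [simp]: "ctransp (ctransp A) = A"
  by (simp add: vec_eq_iff)

lemma ctransp_0 [simp]: "ctransp 0 = 0"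
  by (simp add: vec_eq_iff)

lemma ctransp_add: "ctransp (A + B) = ctransp A + ctransp B"
  by (simp add: vec_eq_iff)

lemma ctransp_diff: "ctransp (A - B) = ctransp A - ctransp B"
  by (simp add: vec_eq_iff)

lemma ctransp_scaleR: "ctransp (r *\<^sub>R A) = r *\<^sub>R ctransp A"
  by (simp add: vec_eq_iff)

lemma ctransp_matrix_mult: "ctransp (A ** B) = ctransp B ** ctransp A"
  by (simp add: vec_eq_iff matrix_matrix_mult_def mult.commute)

lemma matrix_add_rdistrib: "(A + B) ** C = A ** C + B ** (C :: 'a::semiring_1^'n^'n)"
  by (simp add: vec_eq_iff matrix_matrix_mult_def distrib_right sum.distrib)

lemma matrix_diff_ldistrib: "A ** (B - C) = A ** B - A ** (C :: 'a::ring_1^'n^'n)"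
  by (simp add: vec_eq_iff matrix_matrix_mult_def right_diff_distrib sum_subtractf)

lemma matrix_diff_rdistrib: "(A - B) ** C = A ** C - B ** (C :: 'a::ring_1^'n^'n)"
  by (simp add: vec_eq_iff matrix_matrix_mult_def left_diff_distrib sum_subtractf)

lemma matrix_mult_mat_nth [simp]: "(mat c ** A) $ i $ j = c * A $ i $ j"
  by (simp add: matrix_matrix_mult_def mat_def if_distrib if_distribR cong: if_cong)

lemma matrix_mult_mat_right_nth [simp]: "(A ** mat c) $ i $ j = A $ i $ j * c"
  by (simp add: matrix_matrix_mult_def mat_def if_distrib if_distribR cong: if_cong)

lemma matrix_mult_mat_commute: "A ** mat c = mat c ** (A :: complex^'n^'n)"
  by (simp add: vec_eq_iff ac_simps)

lemma matrix_mult_mat_mat: "mat c ** (mat d ** A) = mat (c * d) ** A"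
  by (simp add: vec_eq_iff mult.assoc)

lemma matrix_mult_mat_of_real: "mat (of_real r) ** A = r *\<^sub>R A"
  by (simp add: vec_eq_iff) (simp add: scaleR_conv_of_real)

lemma ctransp_matrix_mult_mat: "ctransp (mat c ** A) = mat (cnj c) ** ctransp A"
  by (simp add: vec_eq_iff)

lemma mcomm_swap: "mcomm B A = - mcomm A B"
  by (simp add: mcomm_def)

lemma mcomm_0_right [simp]: "mcomm A 0 = 0"
  by (simp add: mcomm_def)

lemma mcomm_self [simp]: "mcomm A A = 0"
  by (simp add: mcomm_def)

lemma mcomm_add_right: "mcomm A (B + C) = mcomm A B + mcomm A C"
  by (simp add: mcomm_def matrix_add_ldistrib matrix_add_rdistrib)

lemma mcomm_diff_right: "mcomm A (B - C) = mcomm A B - mcomm A C"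
  by (simp add: mcomm_def matrix_diff_ldistrib matrix_diff_rdistrib)

lemma mcomm_minus_right: "mcomm A (- B) = - mcomm A B"
  using mcomm_diff_right[of A 0 B] by simp

lemma mcomm_scaleR_right: "mcomm A (r *\<^sub>R B) = r *\<^sub>R mcomm A B"
  by (simp add: mcomm_def matrix_scalar_ac scalar_matrix_assoc scaleR_diff_right)

lemma mcomm_matrix_mult_mat_right: "mcomm A (mat c ** B) = mat c ** mcomm A B"
  by (simp add: mcomm_def matrix_diff_ldistrib matrix_mul_assoc matrix_mult_mat_commute)

lemma ctransp_mcomm: "ctransp (mcomm A B) = mcomm (ctransp B) (ctransp A)"
  by (simp add: mcomm_def ctransp_diff ctransp_matrix_mult)

lemma ctransp_mcomm_mcomm:
  assumes "ctransp \<gamma> = \<gamma>"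
  shows "ctransp (mcomm A (mcomm B \<gamma>)) = mcomm (ctransp A) (mcomm (ctransp B) \<gamma>)"
proof -
  have "ctransp (mcomm A (mcomm B \<gamma>)) = mcomm (mcomm \<gamma> (ctransp B)) (ctransp A)"
    using assms by (simp add: ctransp_mcomm)
  also have "\<dots> = mcomm (ctransp A) (mcomm (ctransp B) \<gamma>)"
    by (metis mcomm_swap mcomm_minus_right)
  finally show ?thesis .
qed

lemma trace_ctransp: "trace (ctransp A) = cnj (trace A)"
  by (simp add: trace_def)

lemma trace_scaleR: "trace (r *\<^sub>R A) = r *\<^sub>R trace (A :: complex^'n^'n)"
  by (simp add: trace_def scaleR_sum_right)

lemma trace_matrix_mult_mat: "trace (mat c ** A) = c * trace A"
  by (simp add: trace_def sum_distrib_left)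

lemma trace_mcomm: "trace (mcomm A B) = 0"
  by (simp add: mcomm_def trace_sub trace_mul_sym[of A B])

lemma trace_mcomm_mult: "trace (mcomm A B ** C) = trace (A ** mcomm B C)"
  using trace_mul_sym[of B "A ** C"]
  by (simp add: mcomm_def matrix_diff_ldistrib matrix_diff_rdistrib trace_sub matrix_mul_assoc)

lemma trace_ctransp_mult_self: "trace (ctransp A ** A) = of_real ((norm A)\<^sup>2)"
proof -
  have "trace (ctransp A ** A) = (\<Sum>i\<in>UNIV. \<Sum>k\<in>UNIV. cnj (A $ k $ i) * A $ k $ i)"
    by (simp add: trace_def matrix_matrix_mult_def)
  also have "\<dots> = (\<Sum>k\<in>UNIV. \<Sum>i\<in>UNIV. of_real ((norm (A $ k $ i))\<^sup>2))"
    by (subst sum.swap) (simp only: complex_norm_square mult.commute)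
  also have "\<dots> = of_real ((norm A)\<^sup>2)"
    by (simp add: power2_norm_eq_inner inner_vec_def)
  finally show ?thesis .
qed

lemma linear_bij_betw_iff_kernel_trivial:
  fixes f :: "'a::euclidean_space \<Rightarrow> 'a"
  assumes f: "linear f" and S: "subspace S" "f ` S \<subseteq> S"
  shows "bij_betw f S S \<longleftrightarrow> {x \<in> S. f x = 0} = {0}"
proof -
  have inj_iff: "inj_on f S \<longleftrightarrow> {x \<in> S. f x = 0} = {0}"
    using linear_inj_on_iff_eq_0[OF f S(1)] S(1) f by (auto simp: subspace_0 linear_0)
  have "f ` S = S" if "inj_on f S"
  proof (rule subspace_dim_equal)
    have "span S = S"
      using S(1) by (simp add: span_eq_iff)
    then show "dim S \<le> dim (f ` S)"
      using dim_image_eq[OF f, of S] that by (metis order_refl)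
  qed (use f S in \<open>simp_all add: linear_subspace_image\<close>)
  then show ?thesis
    using inj_iff by (auto simp: bij_betw_def)
qed

lemma subspace_isu2: "subspace isu2"
  using trace_0 by (auto simp: subspace_def isu2_def ctransp_add ctransp_scaleR trace_add trace_scaleR)

lemma isu2_subset_sl2C: "isu2 \<subseteq> sl2C"
  by (auto simp: isu2_def sl2C_def)

lemma ctransp_Mop:
  assumes "ctransp \<gamma> = \<gamma>"
  shows "ctransp (Mop \<phi> \<gamma>) = Mop \<phi> \<gamma>"
  using assms by (simp add: Mop_def ctransp_add ctransp_mcomm_mcomm add.commute)

lemma trace_Mop: "trace (Mop \<phi> \<gamma>) = 0"
  by (simp add: Mop_def trace_add trace_mcomm)

lemma Mop_in_isu2: "\<gamma> \<in> isu2 \<Longrightarrow> Mop \<phi> \<gamma> \<in> isu2"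
  by (simp add: isu2_def ctransp_Mop trace_Mop)

lemma linear_Mop: "linear (Mop \<phi>)"
  by (rule linearI) (simp_all add: Mop_def mcomm_add_right mcomm_scaleR_right scaleR_add_right)

lemma trace_mult_Mop:
  assumes "ctransp \<gamma> = \<gamma>"
  shows "trace (\<gamma> ** Mop \<phi> \<gamma>) = trace (ctransp (mcomm \<phi> \<gamma>) ** mcomm \<phi> \<gamma>)
    + trace (ctransp (mcomm (ctransp \<phi>) \<gamma>) ** mcomm (ctransp \<phi>) \<gamma>)"
  using assms
  by (simp add: Mop_def matrix_add_ldistrib trace_add flip: trace_mcomm_mult)
     (simp add: ctransp_mcomm)

lemma Mop_eq_0_iff:
  assumes "ctransp \<gamma> = \<gamma>"
  shows "Mop \<phi> \<gamma> = 0 \<longleftrightarrow> mcomm \<phi> \<gamma> = 0"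
proof
  assume "Mop \<phi> \<gamma> = 0"
  then have "trace (\<gamma> ** Mop \<phi> \<gamma>) = 0"
    by (simp add: trace_def)
  then have "of_real ((norm (mcomm \<phi> \<gamma>))\<^sup>2 + (norm (mcomm (ctransp \<phi>) \<gamma>))\<^sup>2) = (0 :: complex)"
    by (simp only: trace_mult_Mop[OF assms] trace_ctransp_mult_self of_real_add)
  then show "mcomm \<phi> \<gamma> = 0"
    by (simp only: of_real_eq_0_iff add_nonneg_eq_0_iff zero_le_power2) simp
next
  assume "mcomm \<phi> \<gamma> = 0"
  moreover have "mcomm (ctransp \<phi>) \<gamma> = - ctransp (mcomm \<phi> \<gamma>)"
    using assms ctransp_mcomm[of \<phi> \<gamma>] mcomm_swap[of \<gamma> "ctransp \<phi>"] by simp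
  ultimately show "Mop \<phi> \<gamma> = 0"
    by (simp add: Mop_def)
qed

lemma Mop_kernel_eq_commutant: "{\<gamma> \<in> isu2. Mop \<phi> \<gamma> = 0} = {\<gamma> \<in> isu2. mcomm \<phi> \<gamma> = 0}"
  using Mop_eq_0_iff by (auto simp: isu2_def)

lemma real_if_hermitian_multiple:
  assumes "ctransp A = A" "A \<noteq> 0" "ctransp (mat c ** A) = mat c ** (A :: complex^'n^'n)"
  shows "cnj c = c"
proof -
  obtain i j where "A $ i $ j \<noteq> 0"
    using assms(2) by (auto simp: vec_eq_iff)
  moreover have "cnj c * A $ i $ j = c * A $ i $ j"
    using assms(1,3) by (metis ctransp_matrix_mult_mat matrix_mult_mat_nth)
  ultimately show ?thesis
    by simp
qed

lemma normal_if_hermitian_multiple: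
  assumes "ctransp (mat k ** \<phi>) = mat k ** \<phi>" "mat k ** \<phi> \<noteq> 0"
  shows "mcomm \<phi> (ctransp \<phi>) = (0 :: complex^'n^'n)"
proof -
  have "k \<noteq> 0"
    using assms(2) by auto
  have "mat (cnj k) ** ctransp \<phi> = mat k ** \<phi>"
    using assms(1) by (simp add: ctransp_matrix_mult_mat)
  then have "mat (inverse (cnj k)) ** (mat (cnj k) ** ctransp \<phi>) = mat (inverse (cnj k)) ** (mat k ** \<phi>)"
    by simp
  then have "ctransp \<phi> = mat (k / cnj k) ** \<phi>"
    using \<open>k \<noteq> 0\<close> by (simp add: matrix_mult_mat_mat divide_inverse mult.commute)
  then show ?thesis
    by (simp add: mcomm_matrix_mult_mat_right)
qed

definition mat2 :: "complex \<Rightarrow> complex \<Rightarrow> complex \<Rightarrow> complex \<Rightarrow> cmat2" where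
  "mat2 a b c d = vector [vector [a, b], vector [c, d]]"

lemma mat2_nth [simp]:
  "mat2 a b c d $ 1 $ 1 = a" "mat2 a b c d $ 1 $ 2 = b" "mat2 a b c d $ 2 $ 1 = c" "mat2 a b c d $ 2 $ 2 = d"
  by (simp_all add: mat2_def)

lemma mat2_cases: obtains a b c d where "A = mat2 a b c d"
proof
  show "A = mat2 (A $ 1 $ 1) (A $ 1 $ 2) (A $ 2 $ 1) (A $ 2 $ 2)"
    by (simp add: vec_eq_iff forall_2)
qed

lemma mat2_eq_0_iff [simp]: "mat2 a b c d = 0 \<longleftrightarrow> a = 0 \<and> b = 0 \<and> c = 0 \<and> d = 0"
  by (auto simp: vec_eq_iff forall_2)

lemma trace_mat2 [simp]: "trace (mat2 a b c d) = a + d"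
  by (simp add: trace_def sum_2)

lemma ctransp_mat2 [simp]: "ctransp (mat2 a b c d) = mat2 (cnj a) (cnj c) (cnj b) (cnj d)"
  by (simp add: vec_eq_iff forall_2)

lemma mat2_mult [simp]:
  "mat2 a b c d ** mat2 x y z w = mat2 (a*x + b*z) (a*y + b*w) (c*x + d*z) (c*y + d*w)"
  by (simp add: vec_eq_iff forall_2 matrix_matrix_mult_def sum_2)

lemma mat2_diff [simp]: "mat2 a b c d - mat2 x y z w = mat2 (a - x) (b - y) (c - z) (d - w)"
  by (simp add: vec_eq_iff forall_2)

lemma matrix_mult_mat_mat2: "mat k ** mat2 a b c d = mat2 (k * a) (k * b) (k * c) (k * d)"
  by (simp add: vec_eq_iff forall_2)

lemma mcomm_mat2_trace_free:
  "mcomm (mat2 a b c (-a)) (mat2 x y z (-x))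
     = mat2 (b*z - c*y) (2 * (a*y - b*x)) (2 * (c*x - a*z)) (c*y - b*z)"
  by (simp add: mcomm_def algebra_simps)

lemma mcomm_mat2_eq_0D:
  assumes "mcomm (mat2 a b c (-a)) (mat2 x y z (-x)) = 0"
  shows "b*z = c*y" "a*y = b*x" "c*x = a*z"
  using arg_cong[OF assms, of "\<lambda>M. M $ 1 $ 1"] arg_cong[OF assms, of "\<lambda>M. M $ 1 $ 2"]
    arg_cong[OF assms, of "\<lambda>M. M $ 2 $ 1"]
  by (simp_all add: mcomm_mat2_trace_free)

lemma sl2C_cases:
  assumes "\<phi> \<in> sl2C"
  obtains a b c where "\<phi> = mat2 a b c (-a)"
proof -
  obtain a b c d where \<phi>: "\<phi> = mat2 a b c d"
    by (rule mat2_cases)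
  with assms have "d = -a"
    by (simp add: sl2C_def add_eq_0_iff)
  with \<phi> that show ?thesis
    by blast
qed

lemma mat2_diag_in_isu2: "mat2 1 0 0 (-1) \<in> isu2"
  by (simp add: isu2_def)

lemma proportional_if_cross_eq_0:
  fixes a b c x y z :: "'a::field"
  assumes "\<not> (a = 0 \<and> b = 0 \<and> c = 0)" "b*z = c*y" "a*y = b*x" "c*x = a*z"
  obtains k where "x = k*a" "y = k*b" "z = k*c"
proof -
  consider "a \<noteq> 0" | "a = 0" "b \<noteq> 0" | "a = 0" "b = 0" "c \<noteq> 0"
    using assms(1) by blast
  then show ?thesis
  proof cases
    case 1
    with assms(2-4) show ?thesis
      by (intro that[of "x/a"]) (simp_all add: field_simps)
  next
    case 2
    with assms(2-4) show ?thesis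
      by (intro that[of "y/b"]) (simp_all add: field_simps)
  next
    case 3
    with assms(2-4) show ?thesis
      by (intro that[of "z/c"]) (simp_all add: field_simps)
  qed
qed

lemma sl2C_centralizer:
  assumes "\<phi> \<in> sl2C" "\<gamma> \<in> sl2C" "\<phi> \<noteq> 0" "mcomm \<phi> \<gamma> = 0"
  obtains k where "\<gamma> = mat k ** \<phi>"
proof -
  obtain a b c where \<phi>: "\<phi> = mat2 a b c (-a)"
    using assms(1) by (rule sl2C_cases)
  obtain x y z where \<gamma>: "\<gamma> = mat2 x y z (-x)"
    using assms(2) by (rule sl2C_cases)
  have "\<not> (a = 0 \<and> b = 0 \<and> c = 0)"
    using assms(3) \<phi> by auto
  moreover have "b*z = c*y" "a*y = b*x" "c*x = a*z"
    using assms(4) unfolding \<phi> \<gamma> by (fact mcomm_mat2_eq_0D)+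
  ultimately obtain k where "x = k*a" "y = k*b" "z = k*c"
    by (rule proportional_if_cross_eq_0)
  then have "\<gamma> = mat k ** \<phi>"
    by (simp add: \<phi> \<gamma> matrix_mult_mat_mat2)
  then show ?thesis
    by (rule that)
qed

lemma isu2_commuting_if_normal:
  assumes "\<phi> \<in> sl2C" "\<phi> \<noteq> 0" "mcomm \<phi> (ctransp \<phi>) = 0"
  obtains \<gamma> where "\<gamma> \<in> isu2" "\<gamma> \<noteq> 0" "mcomm \<phi> \<gamma> = 0"
proof -
  define H where "H = \<phi> + ctransp \<phi>"
  define K where "K = mat \<i> ** (\<phi> - ctransp \<phi>)"
  have "trace \<phi> = 0"
    using assms(1) by (simp add: sl2C_def)
  then have H: "H \<in> isu2" "mcomm \<phi> H = 0"
    using assms(3) by (simp_all add: H_def isu2_def ctransp_add trace_add trace_ctransp add.commute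
        mcomm_add_right)
  have "ctransp K = K"
    by (simp add: K_def vec_eq_iff algebra_simps)
  then have K: "K \<in> isu2" "mcomm \<phi> K = 0"
    using \<open>trace \<phi> = 0\<close> assms(3)
    by (simp_all add: isu2_def K_def trace_matrix_mult_mat trace_sub trace_ctransp
        mcomm_matrix_mult_mat_right mcomm_diff_right)
  have "2 *\<^sub>R \<phi> = H + mat (- \<i>) ** K"
    by (simp add: H_def K_def vec_eq_iff algebra_simps scaleR_conv_of_real)
  with assms(2) have "H \<noteq> 0 \<or> K \<noteq> 0"
    by auto
  with H K that show ?thesis
    by blast
qed

lemma isu2_commutant_eq_span:
  assumes \<phi>: "\<phi> \<in> sl2C" "\<phi> \<noteq> 0" and g: "g \<in> isu2" "g \<noteq> 0" "mcomm \<phi> g = 0"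
  shows "{\<gamma> \<in> isu2. mcomm \<phi> \<gamma> = 0} = span {g}"
proof
  show "span {g} \<subseteq> {\<gamma> \<in> isu2. mcomm \<phi> \<gamma> = 0}"
    using g subspace_isu2 by (auto simp: span_singleton subspace_scale mcomm_scaleR_right)
next
  obtain k0 where k0: "g = mat k0 ** \<phi>"
    by (rule sl2C_centralizer[OF \<phi>(1) subsetD[OF isu2_subset_sl2C g(1)] \<phi>(2) g(3)])
  with g(2) have "k0 \<noteq> 0"
    by auto
  show "{\<gamma> \<in> isu2. mcomm \<phi> \<gamma> = 0} \<subseteq> span {g}"
  proof clarify
    fix \<gamma> assume \<gamma>: "\<gamma> \<in> isu2" "mcomm \<phi> \<gamma> = 0"
    obtain k where "\<gamma> = mat k ** \<phi>"
      by (rule sl2C_centralizer[OF \<phi>(1) subsetD[OF isu2_subset_sl2C \<gamma>(1)] \<phi>(2) \<gamma>(2)])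
    with k0 \<open>k0 \<noteq> 0\<close> have \<gamma>_g: "\<gamma> = mat (k / k0) ** g"
      by (simp add: matrix_mult_mat_mat)
    have "cnj (k / k0) = k / k0"
      using g \<gamma> \<gamma>_g by (intro real_if_hermitian_multiple[of g]) (auto simp: isu2_def)
    then have "\<gamma> = Re (k / k0) *\<^sub>R g"
      by (metis \<gamma>_g Reals_cnj_iff of_real_Re matrix_mult_mat_of_real)
    then show "\<gamma> \<in> span {g}"
      by (auto simp: span_singleton)
  qed
qed

lemma dim_isu2_commutant_normal:
  assumes "\<phi> \<in> sl2C" "\<phi> \<noteq> 0" "mcomm \<phi> (ctransp \<phi>) = 0"
  shows "dim {\<gamma> \<in> isu2. mcomm \<phi> \<gamma> = 0} = 1"
proof -
  obtain g where "g \<in> isu2" "g \<noteq> 0" "mcomm \<phi> g = 0"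
    using assms by (rule isu2_commuting_if_normal)
  with assms show ?thesis
    by (simp add: isu2_commutant_eq_span dim_span)
qed

lemma isu2_commutant_trivial_iff_not_normal:
  assumes "\<phi> \<in> sl2C"
  shows "{\<gamma> \<in> isu2. mcomm \<phi> \<gamma> = 0} = {0} \<longleftrightarrow> mcomm \<phi> (ctransp \<phi>) \<noteq> 0"
proof -
  have "(\<exists>\<gamma> \<in> isu2. \<gamma> \<noteq> 0 \<and> mcomm \<phi> \<gamma> = 0) \<longleftrightarrow> mcomm \<phi> (ctransp \<phi>) = 0"
  proof
    assume "\<exists>\<gamma> \<in> isu2. \<gamma> \<noteq> 0 \<and> mcomm \<phi> \<gamma> = 0"
    then obtain \<gamma> where \<gamma>: "\<gamma> \<in> isu2" "\<gamma> \<noteq> 0" "mcomm \<phi> \<gamma> = 0"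
      by blast
    show "mcomm \<phi> (ctransp \<phi>) = 0"
    proof (cases "\<phi> = 0")
      case True
      then show ?thesis
        by (simp add: mcomm_def)
    next
      case False
      obtain k where "\<gamma> = mat k ** \<phi>"
        by (rule sl2C_centralizer[OF assms subsetD[OF isu2_subset_sl2C \<gamma>(1)] False \<gamma>(3)])
      with \<gamma>(1,2) show ?thesis
        by (intro normal_if_hermitian_multiple[of k]) (simp_all add: isu2_def)
    qed
  next
    assume normal: "mcomm \<phi> (ctransp \<phi>) = 0"
    show "\<exists>\<gamma> \<in> isu2. \<gamma> \<noteq> 0 \<and> mcomm \<phi> \<gamma> = 0"
    proof (cases "\<phi> = 0")
      case True
      then show ?thesis
        using mat2_diag_in_isu2 by (intro bexI[of _ "mat2 1 0 0 (-1)"]) (simp_all add: mcomm_def)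
    next
      case False
      obtain \<gamma> where "\<gamma> \<in> isu2" "\<gamma> \<noteq> 0" "mcomm \<phi> \<gamma> = 0"
        by (rule isu2_commuting_if_normal[OF assms False normal])
      then show ?thesis
        by blast
    qed
  qed
  moreover have "0 \<in> {\<gamma> \<in> isu2. mcomm \<phi> \<gamma> = 0}"
    using subspace_0[OF subspace_isu2] by simp
  ultimately show ?thesis
    by auto
qed

theorem lemma3p7:
  fixes \<phi> :: cmat2
  assumes "\<phi> \<in> sl2C"
  shows "(bij_betw (Mop \<phi>) isu2 isu2 \<longleftrightarrow> mcomm \<phi> (ctransp \<phi>) \<noteq> 0)
    \<and> ((mcomm \<phi> (ctransp \<phi>) = 0 \<and> \<phi> \<noteq> 0) \<longrightarrow>
         dim {\<gamma> \<in> isu2. Mop \<phi> \<gamma> = 0} = 1)"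
proof -
  have "bij_betw (Mop \<phi>) isu2 isu2 \<longleftrightarrow> {\<gamma> \<in> isu2. Mop \<phi> \<gamma> = 0} = {0}"
    using Mop_in_isu2 by (intro linear_bij_betw_iff_kernel_trivial linear_Mop subspace_isu2) blast
  with assms show ?thesis
    by (simp add: Mop_kernel_eq_commutant isu2_commutant_trivial_iff_not_normal dim_isu2_commutant_normal)
qed

end
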